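(* Let $k$ be an arbitrary field of characteristic $0$. Let $x$, $y$ and $z$ be roots of unity in $k$, let $a$, $b$ and $c$ be integer numbers and consider the matrix $$M(a,b,c;x,y,z) = \begin{pmatrix} x^a & x^b & x^c \\ y^a & y^b & y^c \\ z^a & z^b & z^c \end{pmatrix}.$$ If this matrix is degenerate, then it has either two proportional rows or two proportional columns. *)

theory Defs
  imports "HOL-Analysis.Analysis"
begin

definition root_of_unity :: "'a::field \<Rightarrow> bool" where
  "root_of_unity x \<longleftrightarrow> (\<exists>n::nat. n > 0 \<and> x ^ n = 1)"

definition proportional :: "'a::field ^ 'n \<Rightarrow> 'a ^ 'n \<Rightarrow> bool" where
  "proportional u v \<longleftrightarrow> (\<exists>s t. (s \<noteq> 0 \<or> t \<noteq> 0) \<and> s *s u + t *s v = 0)"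

definition M3 :: "int \<Rightarrow> int \<Rightarrow> int \<Rightarrow> 'a::field \<Rightarrow> 'a \<Rightarrow> 'a \<Rightarrow> 'a ^ 3 ^ 3" where
  "M3 a b c x y z = (\<chi> i j. (if i = 1 then x else if i = 2 then y else z) powi
                              (if j = 1 then a else if j = 2 then b else c))"

end

theory Submission
  imports Defs "HOL-Computational_Algebra.Fundamental_Theorem_Algebra" "HOL-Computational_Algebra.Primes"
begin

text \<open>
  Rescaling rows and columns turns the matrix into one of the form
  \<open>[[1, 1, 1], [1, a, b], [1, c, d]]\<close> with roots of unity \<open>a, b, c, d\<close>, whose determinant is
  \<open>(a - 1)(d - 1) - (b - 1)(c - 1)\<close>. Finite groups of roots of unity in a field are cyclic, so
  \<open>a, b, c, d\<close> are powers of a single root of unity \<open>\<theta>\<close> and the vanishing of the determinant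
  is a relation \<open>g(\<theta>) = 0\<close> with \<open>g \<in> \<rat>[X]\<close>. Over \<open>\<rat>\<close>, \<open>\<theta>\<close> is conjugate to a complex
  number \<open>\<xi>\<close> on the unit circle, and complex conjugation maps \<open>\<xi>\<close> to \<open>1/\<xi>\<close>; hence also
  \<open>g(1/\<theta>) = 0\<close>, i.e. the relation persists after inverting \<open>a, b, c, d\<close>. Unless \<open>a = 1\<close> or
  \<open>d = 1\<close>, the two relations give \<open>ad = bc\<close> and \<open>a + d = b + c\<close>, so \<open>{a, d} = {b, c}\<close>; every
  resulting case makes two rows or two columns of the normalised matrix equal.
  The argument only uses that all nine entries are roots of unity.
\<close>

section \<open>Roots of unity and their multiplicative order\<close>

lemma power_power_swap: "(w ^ m) ^ n = (w ^ n) ^ m" for w :: "'a::monoid_mult"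
  by (simp only: power_mult[symmetric] mult.commute)

lemma root_of_unity_nonzero: "root_of_unity w \<Longrightarrow> w \<noteq> 0"
  unfolding root_of_unity_def by (auto simp: zero_power)

lemma root_of_unity_power:
  assumes "root_of_unity w"
  shows "root_of_unity (w ^ k)"
proof -
  obtain n where "0 < n" "w ^ n = 1" using assms unfolding root_of_unity_def by blast
  then show ?thesis unfolding root_of_unity_def by (auto simp: power_power_swap[of w k])
qed

lemma root_of_unity_mult:
  assumes "root_of_unity v" "root_of_unity w"
  shows "root_of_unity (v * w)"
proof -
  obtain m n where "0 < m" "v ^ m = 1" "0 < n" "w ^ n = 1"
    using assms unfolding root_of_unity_def by blast
  moreover have "(v * w) ^ (m * n) = (v ^ m) ^ n * (w ^ n) ^ m"
    by (simp only: power_mult_distrib power_mult[symmetric] mult.commute)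
  ultimately show ?thesis unfolding root_of_unity_def by (intro exI[of _ "m * n"]) simp
qed

lemma root_of_unity_inverse: "root_of_unity w \<Longrightarrow> root_of_unity (inverse w)"
  unfolding root_of_unity_def by (auto simp: power_inverse)

lemma root_of_unity_divide:
  "root_of_unity v \<Longrightarrow> root_of_unity w \<Longrightarrow> root_of_unity (v / w)"
  by (simp add: divide_inverse root_of_unity_mult root_of_unity_inverse)

lemma root_of_unity_power_int: "root_of_unity w \<Longrightarrow> root_of_unity (w powi k)"
  by (cases "0 \<le> k") (simp_all add: power_int_def root_of_unity_power root_of_unity_inverse)

definition mult_order :: "'a::field \<Rightarrow> nat" where
  "mult_order w = (LEAST k. 0 < k \<and> w ^ k = 1)"

lemma mult_order:
  assumes "root_of_unity w"
  shows mult_order_pos: "0 < mult_order w" and power_mult_order: "w ^ mult_order w = 1"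
  using LeastI_ex[of "\<lambda>k. 0 < k \<and> w ^ k = 1"] assms
  unfolding mult_order_def root_of_unity_def by auto

lemma mult_order_le:
  assumes "0 < k" "w ^ k = 1"
  shows "mult_order w \<le> k"
  unfolding mult_order_def by (rule Least_le) (use assms in simp)

lemma power_eq_1_iff_mult_order_dvd:
  assumes "root_of_unity w"
  shows "w ^ k = 1 \<longleftrightarrow> mult_order w dvd k"
proof
  assume "w ^ k = 1"
  have "w ^ k = (w ^ mult_order w) ^ (k div mult_order w) * w ^ (k mod mult_order w)"
    by (simp only: power_mult[symmetric] power_add[symmetric] mult_div_mod_eq)
  then have "w ^ (k mod mult_order w) = 1"
    by (simp only: \<open>w ^ k = 1\<close> power_mult_order[OF assms] power_one mult_1_left)
  moreover have "k mod mult_order w < mult_order w"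
    using mult_order_pos[OF assms] by simp
  ultimately have "k mod mult_order w = 0"
    using mult_order_le[of "k mod mult_order w" w] by linarith
  then show "mult_order w dvd k" by (simp add: dvd_eq_mod_eq_0)
next
  assume "mult_order w dvd k"
  then show "w ^ k = 1"
    using assms by (auto simp: power_mult power_mult_order)
qed

lemma mult_order_eqI:
  assumes "root_of_unity w" "\<And>k. w ^ k = 1 \<longleftrightarrow> n dvd k"
  shows "mult_order w = n"
proof (rule dvd_antisym)
  show "mult_order w dvd n"
    using assms by (simp flip: power_eq_1_iff_mult_order_dvd)
  show "n dvd mult_order w"
    using assms by (simp flip: assms(2) add: power_mult_order)
qed

lemma mult_order_power:
  assumes "root_of_unity w" "mult_order w = d * e" "0 < d"
  shows "mult_order (w ^ d) = e"
proof (rule mult_order_eqI)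
  show "root_of_unity (w ^ d)" using assms(1) by (rule root_of_unity_power)
  show "(w ^ d) ^ k = 1 \<longleftrightarrow> e dvd k" for k
    using assms by (simp add: power_eq_1_iff_mult_order_dvd flip: power_mult)
qed

lemma mult_order_mult_coprime:
  assumes v: "root_of_unity v" and w: "root_of_unity w"
    and coprime: "coprime (mult_order v) (mult_order w)"
  shows "mult_order (v * w) = mult_order v * mult_order w"
proof (rule mult_order_eqI)
  show "root_of_unity (v * w)" using v w by (rule root_of_unity_mult)
  fix k
  let ?p = "mult_order v" and ?q = "mult_order w"
  have vp: "v ^ (?p * j) = 1" and wq: "w ^ (?q * j) = 1" for j
    using v w by (simp_all add: power_mult power_mult_order)
  show "(v * w) ^ k = 1 \<longleftrightarrow> ?p * ?q dvd k"
  proof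
    assume vw: "(v * w) ^ k = 1"
    have "v ^ (k * ?q) = (v * w) ^ (k * ?q)"
      using wq[of k] by (simp add: power_mult_distrib mult.commute)
    also have "\<dots> = 1" by (simp add: power_mult vw)
    finally have p: "?p dvd k * ?q" using v by (simp add: power_eq_1_iff_mult_order_dvd)
    have "w ^ (k * ?p) = (v * w) ^ (k * ?p)"
      using vp[of k] by (simp add: power_mult_distrib mult.commute)
    also have "\<dots> = 1" by (simp add: power_mult vw)
    finally have "?q dvd k * ?p" using w by (simp add: power_eq_1_iff_mult_order_dvd)
    with p show "?p * ?q dvd k"
      using coprime by (simp add: coprime_commute coprime_dvd_mult_left_iff divides_mult)
  next
    assume "?p * ?q dvd k"
    then obtain j where "k = ?p * ?q * j" by blast
    then show "(v * w) ^ k = 1"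
      using vp[of "?q * j"] wq[of "?p * j"]
      by (simp add: power_mult_distrib mult_ac)
  qed
qed

lemma inj_on_power_mult_order:
  assumes "root_of_unity \<theta>"
  shows "inj_on (power \<theta>) {..<mult_order \<theta>}"
proof (rule linorder_inj_onI')
  fix i j assume "i \<in> {..<mult_order \<theta>}" "j \<in> {..<mult_order \<theta>}" "i < j"
  then have "\<not> mult_order \<theta> dvd j - i" by (auto dest: dvd_imp_le)
  then have "\<theta> ^ (j - i) \<noteq> 1" using assms by (simp add: power_eq_1_iff_mult_order_dvd)
  moreover have "\<theta> ^ j = \<theta> ^ i * \<theta> ^ (j - i)"
    using \<open>i < j\<close> by (simp flip: power_add)
  ultimately show "\<theta> ^ i \<noteq> \<theta> ^ j"
    using root_of_unity_nonzero[OF assms] by auto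
qed

lemma mult_order_combine_prime_parts:
  assumes \<theta>: "root_of_unity \<theta>" and w: "root_of_unity w" and "prime p"
    and \<theta>_order: "mult_order \<theta> = p ^ k * r" and "\<not> p dvd r"
    and w_order: "mult_order w = p ^ j * s" and "0 < s"
  shows "mult_order (\<theta> ^ p ^ k * w ^ s) = r * p ^ j"
proof -
  have "mult_order (\<theta> ^ p ^ k) = r"
    using mult_order_power[OF \<theta> \<theta>_order] \<open>prime p\<close> by (simp add: prime_gt_0_nat)
  moreover have "mult_order (w ^ s) = p ^ j"
    using mult_order_power[OF w] w_order \<open>0 < s\<close> by (simp add: mult.commute)
  moreover have "coprime r (p ^ j)"
    using \<open>\<not> p dvd r\<close> \<open>prime p\<close> by (simp add: coprime_commute prime_imp_coprime)
  ultimately show ?thesis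
    using mult_order_mult_coprime root_of_unity_power \<theta> w by metis
qed

lemma mult_order_dvd_max_mult_order:
  fixes \<theta> w :: "'a::field"
  assumes "0 < L" and \<theta>: "\<theta> ^ L = 1" and w: "w ^ L = 1"
    and max: "\<And>v::'a. v ^ L = 1 \<Longrightarrow> mult_order v \<le> mult_order \<theta>"
  shows "mult_order w dvd mult_order \<theta>"
proof (rule ccontr)
  assume "\<not> mult_order w dvd mult_order \<theta>"
  \<comment> \<open>then some prime occurs more often in the order of \<open>w\<close> than in that of \<open>\<theta>\<close>;
    replacing the \<open>p\<close>-part of \<open>\<theta>\<close> by that of \<open>w\<close> yields a larger order\<close>
  have roots: "root_of_unity v" if "v ^ L = 1" for v :: 'a
    using \<open>0 < L\<close> that unfolding root_of_unity_def by blast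
  define m where "m = mult_order \<theta>"
  define n where "n = mult_order w"
  have "0 < m" "0 < n"
    unfolding m_def n_def using mult_order_pos[OF roots[OF \<theta>]] mult_order_pos[OF roots[OF w]] .
  have "\<not> (\<forall>p. prime p \<longrightarrow> multiplicity p n \<le> multiplicity p m)"
    using \<open>\<not> mult_order w dvd mult_order \<theta>\<close> \<open>0 < n\<close> multiplicity_le_imp_dvd[of n m]
    unfolding m_def n_def by auto
  then obtain p where p: "prime p" "multiplicity p m < multiplicity p n"
    by (auto simp: not_le)
  define k where "k = multiplicity p m"
  define j where "j = multiplicity p n"
  obtain r where r: "m = p ^ k * r" "\<not> p dvd r"
    using multiplicity_decompose'[of m p] \<open>0 < m\<close> p(1) unfolding k_def
    by (metis not_prime_unit gr_implies_not0)
  obtain s where s: "n = p ^ j * s"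
    using multiplicity_dvd[of p n] unfolding j_def by blast
  with \<open>0 < n\<close> have "0 < s" by simp
  have "mult_order (\<theta> ^ p ^ k * w ^ s) = r * p ^ j"
    using mult_order_combine_prime_parts roots \<theta> w p(1) r s \<open>0 < s\<close> unfolding m_def n_def by blast
  moreover have "(\<theta> ^ p ^ k * w ^ s) ^ L = 1"
    using \<theta> w by (simp add: power_mult_distrib power_power_swap[of _ _ L])
  ultimately have "r * p ^ j \<le> m"
    using max unfolding m_def by metis
  moreover have "p ^ k < p ^ j"
    using p unfolding k_def j_def by (intro power_strict_increasing prime_gt_1_nat)
  moreover have "0 < r" using r(1) \<open>0 < m\<close> by (cases r) auto
  ultimately show False using r(1) by (simp add: mult.commute)
qed

lemma monom_1_minus_1_nonzero:
  assumes "0 < n"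
  shows "monom 1 n - 1 \<noteq> (0::'a::comm_ring_1 poly)"
proof
  assume "monom 1 n - 1 = (0::'a poly)"
  then have "coeff (monom 1 n - 1 :: 'a poly) n = 0" by simp
  with assms show False by simp
qed

lemma nth_roots_of_unity_finite:
  assumes "0 < n"
  shows "finite {w::'a::idom. w ^ n = 1}" and "card {w::'a. w ^ n = 1} \<le> n"
proof -
  let ?p = "monom 1 n - 1 :: 'a poly"
  have "?p \<noteq> 0" using assms by (rule monom_1_minus_1_nonzero)
  moreover have roots: "{w::'a. w ^ n = 1} = {w. poly ?p w = 0}"
    by (simp add: poly_monom)
  moreover have "degree ?p \<le> n"
    by (rule degree_diff_le) (simp_all add: degree_monom_le)
  ultimately show "finite {w::'a. w ^ n = 1}" "card {w::'a. w ^ n = 1} \<le> n"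
    using poly_roots_finite[of ?p] card_poly_roots_bound[of ?p] by simp_all
qed

lemma roots_of_unity_cyclic:
  assumes "0 < L"
  shows "\<exists>\<theta>::'a::field. {w. w ^ L = 1} = range (power \<theta>)"
proof -
  define G where "G = {w::'a. w ^ L = 1}"
  have "finite G"
    unfolding G_def using assms by (rule nth_roots_of_unity_finite)
  moreover have "1 \<in> G" unfolding G_def by simp
  ultimately have "Max (mult_order ` G) \<in> mult_order ` G" by (intro Max_in) auto
  then obtain \<theta> where \<theta>_max: "Max (mult_order ` G) = mult_order \<theta>" and "\<theta> \<in> G"
    by (rule imageE)
  have max: "mult_order v \<le> mult_order \<theta>" if "v \<in> G" for v
    unfolding \<theta>_max[symmetric] using \<open>finite G\<close> that by simp
  from \<open>\<theta> \<in> G\<close> have \<theta>: "\<theta> ^ L = 1" "root_of_unity \<theta>"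
    unfolding G_def root_of_unity_def using assms by auto
  define m where "m = mult_order \<theta>"
  have "0 < m" "\<theta> ^ m = 1"
    unfolding m_def using \<theta>(2) by (rule mult_order_pos, rule power_mult_order)
  have "w ^ m = 1" if "w \<in> G" for w
  proof -
    have "root_of_unity w" using that assms unfolding G_def root_of_unity_def by auto
    moreover have "mult_order w dvd m"
      unfolding m_def using assms \<theta>(1) that max
      by (intro mult_order_dvd_max_mult_order) (auto simp: G_def)
    ultimately show ?thesis by (simp add: power_eq_1_iff_mult_order_dvd)
  qed
  moreover have "power \<theta> ` {..<m} = {w. w ^ m = 1}"
  proof (rule card_seteq)
    show "finite {w::'a. w ^ m = 1}" using \<open>0 < m\<close> by (rule nth_roots_of_unity_finite)
    show "power \<theta> ` {..<m} \<subseteq> {w. w ^ m = 1}"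
      using \<open>\<theta> ^ m = 1\<close> by (auto simp: power_power_swap[of \<theta> _ m])
    have "card (power \<theta> ` {..<m}) = m"
      using inj_on_power_mult_order[OF \<theta>(2)] by (simp add: m_def card_image)
    then show "card {w::'a. w ^ m = 1} \<le> card (power \<theta> ` {..<m})"
      using nth_roots_of_unity_finite(2)[OF \<open>0 < m\<close>, where 'a='a] by simp
  qed
  ultimately have "G \<subseteq> range (power \<theta>)" by blast
  moreover have "range (power \<theta>) \<subseteq> G"
    using \<theta>(1) by (auto simp: G_def power_power_swap[of \<theta> _ L])
  ultimately show ?thesis unfolding G_def by blast
qed

lemma roots_of_unity_common_generator:
  fixes S :: "'a::field set"
  assumes "finite S" "\<And>w. w \<in> S \<Longrightarrow> root_of_unity w"
  shows "\<exists>\<theta>. root_of_unity \<theta> \<and> S \<subseteq> range (power \<theta>)"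
proof -
  define L where "L = (\<Prod>w\<in>S. mult_order w)"
  have "0 < L"
    unfolding L_def using assms by (auto intro!: prod_pos mult_order_pos)
  obtain \<theta> :: 'a where \<theta>: "{w. w ^ L = 1} = range (power \<theta>)"
    using roots_of_unity_cyclic[OF \<open>0 < L\<close>] ..
  have "w ^ L = 1" if "w \<in> S" for w
  proof -
    have "mult_order w dvd L" unfolding L_def using assms(1) that by (rule dvd_prodI)
    then show ?thesis using power_eq_1_iff_mult_order_dvd[OF assms(2)[OF that]] by blast
  qed
  moreover have "root_of_unity \<theta>"
  proof -
    have "\<theta> ^ 1 \<in> {w. w ^ L = 1}" unfolding \<theta> by (rule rangeI)
    then have "\<theta> ^ L = 1" by simp
    then show ?thesis using \<open>0 < L\<close> unfolding root_of_unity_def by blast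
  qed
  ultimately show ?thesis using \<theta> by blast
qed

section \<open>Rational polynomial relations at roots of unity\<close>

definition rpoly :: "rat poly \<Rightarrow> 'a::field_char_0 \<Rightarrow> 'a" where
  "rpoly p = poly (map_poly of_rat p)"

lemma map_poly_of_rat_add: "map_poly of_rat (p + q) = map_poly of_rat p + map_poly of_rat q"
  by (rule poly_eqI) (simp add: coeff_map_poly of_rat_add)

lemma map_poly_of_rat_diff: "map_poly of_rat (p - q) = map_poly of_rat p - map_poly of_rat q"
  by (rule poly_eqI) (simp add: coeff_map_poly of_rat_diff)

lemma map_poly_of_rat_mult: "map_poly of_rat (p * q) = map_poly of_rat p * map_poly of_rat q"
  by (rule poly_eqI) (simp add: coeff_map_poly coeff_mult of_rat_sum of_rat_mult)

lemma rpoly_add [simp]: "rpoly (p + q) x = rpoly p x + rpoly q x"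
  by (simp add: rpoly_def map_poly_of_rat_add)

lemma rpoly_diff [simp]: "rpoly (p - q) x = rpoly p x - rpoly q x"
  by (simp add: rpoly_def map_poly_of_rat_diff)

lemma rpoly_mult [simp]: "rpoly (p * q) x = rpoly p x * rpoly q x"
  by (simp add: rpoly_def map_poly_of_rat_mult)

lemma rpoly_1 [simp]: "rpoly 1 x = 1"
  by (simp add: rpoly_def)

lemma rpoly_monom [simp]: "rpoly (monom 1 n) x = x ^ n"
  by (simp add: rpoly_def map_poly_monom poly_monom)

lemma rpoly_const [simp]: "rpoly [:c:] x = of_rat c"
  by (cases "c = 0") (simp_all add: rpoly_def map_poly_pCons)

lemma rpoly_dvd_eq_0: "f dvd g \<Longrightarrow> rpoly f x = 0 \<Longrightarrow> rpoly g x = 0"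
  by (auto elim!: dvdE)

lemma rpoly_reflect_poly:
  assumes "x \<noteq> 0"
  shows "rpoly (reflect_poly p) x = x ^ degree p * rpoly p (inverse x)"
proof -
  have "map_poly of_rat (reflect_poly p) = reflect_poly (map_poly (of_rat :: rat \<Rightarrow> 'a) p)"
    by (rule poly_eqI) (simp add: coeff_reflect_poly coeff_map_poly degree_map_poly)
  then show ?thesis
    using assms by (simp add: rpoly_def poly_reflect_poly_nz degree_map_poly)
qed

lemma rpoly_cnj: "rpoly p (cnj z) = cnj (rpoly p z)"
proof -
  have "cnj \<circ> of_rat = (of_rat :: rat \<Rightarrow> complex)"
  proof
    fix r :: rat
    show "(cnj \<circ> of_rat) r = of_rat r" by (cases r) (simp add: of_rat_rat)
  qed
  then show ?thesis
    by (simp add: rpoly_def poly_cnj map_poly_map_poly)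
qed

lemma degree_pos_if_rpoly_root:
  assumes "p \<noteq> 0" "rpoly p x = 0"
  shows "0 < degree p"
proof (rule ccontr)
  assume "\<not> 0 < degree p"
  then obtain c where "p = [:c:]" by (metis degree_eq_zeroE not_gr0)
  with assms show False by simp
qed

lemma rpoly_annihilator_principal:
  fixes x :: "'a::field_char_0"
  assumes "p \<noteq> 0" "rpoly p x = 0"
  obtains f where "f \<noteq> 0" "\<And>g. rpoly g x = 0 \<longleftrightarrow> f dvd g"
proof -
  define P where "P g \<longleftrightarrow> g \<noteq> 0 \<and> rpoly g x = 0" for g
  define f where "f = arg_min degree P"
  have "P f" and f_min: "\<And>g. P g \<Longrightarrow> degree f \<le> degree g"
    using arg_min_nat_lemma[of P p degree] assms unfolding f_def P_def by auto
  have dvd: "f dvd g" if "rpoly g x = 0" for g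
  proof (rule ccontr)
    assume "\<not> f dvd g"
    then have "g mod f \<noteq> 0" by (simp add: dvd_eq_mod_eq_0)
    moreover have "rpoly (g mod f) x = 0"
      using that \<open>P f\<close> unfolding P_def by (simp add: mod_eq_self_iff_div_eq_0 minus_div_mult_eq_mod[symmetric])
    ultimately have "degree f \<le> degree (g mod f)"
      using f_min unfolding P_def by blast
    with degree_mod_less_degree[of f g] \<open>\<not> f dvd g\<close> \<open>P f\<close> show False
      unfolding P_def by simp
  qed
  show ?thesis
  proof (rule that)
    show "f \<noteq> 0" using \<open>P f\<close> unfolding P_def by simp
    show "rpoly g x = 0 \<longleftrightarrow> f dvd g" for g
      using dvd[of g] rpoly_dvd_eq_0[of f g x] \<open>P f\<close> unfolding P_def by blast
  qed
qed

lemma ex_complex_rat_conjugate: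
  fixes x :: "'a::field_char_0"
  assumes "p \<noteq> 0" "rpoly p x = 0"
  obtains \<xi> :: complex where "\<And>g. rpoly g x = 0 \<longleftrightarrow> rpoly g \<xi> = 0"
proof -
  obtain f where "f \<noteq> 0" and f: "\<And>g. rpoly g x = 0 \<longleftrightarrow> f dvd g"
    using rpoly_annihilator_principal[OF assms] by blast
  have "rpoly f x = 0" using f by simp
  then have "0 < degree (map_poly (of_rat :: rat \<Rightarrow> complex) f)"
    using degree_pos_if_rpoly_root[OF \<open>f \<noteq> 0\<close>] by (simp add: degree_map_poly)
  then obtain \<xi> :: complex where "rpoly f \<xi> = 0"
    unfolding rpoly_def using alg_closed_imp_poly_has_root by blast
  then obtain h where "h \<noteq> 0" and h: "\<And>g. rpoly g \<xi> = 0 \<longleftrightarrow> h dvd g"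
    using rpoly_annihilator_principal[OF \<open>f \<noteq> 0\<close>] by blast
  have "rpoly h \<xi> = 0" using h by simp
  with \<open>h \<noteq> 0\<close> have "0 < degree h" by (rule degree_pos_if_rpoly_root)
  have "h dvd f" using h \<open>rpoly f \<xi> = 0\<close> by blast
  then obtain e where e: "f = h * e" by (rule dvdE)
  have "rpoly h x = 0"
  proof (rule ccontr)
    assume "rpoly h x \<noteq> 0"
    moreover have "rpoly h x * rpoly e x = 0"
      using \<open>rpoly f x = 0\<close> unfolding e by simp
    ultimately have "f dvd e" using f by simp
    moreover have "e \<noteq> 0" using e \<open>f \<noteq> 0\<close> by auto
    ultimately have "degree f \<le> degree e" by (rule dvd_imp_degree_le)
    moreover have "degree f = degree h + degree e"
      using e \<open>h \<noteq> 0\<close> \<open>e \<noteq> 0\<close> by (simp add: degree_mult_eq)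
    ultimately show False using \<open>0 < degree h\<close> by simp
  qed
  then have "f dvd h" using f by blast
  with \<open>h dvd f\<close> have "rpoly g x = 0 \<longleftrightarrow> rpoly g \<xi> = 0" for g
    using f h dvd_trans by blast
  then show ?thesis using that by blast
qed

lemma rpoly_inverse_root_of_unity:
  fixes x :: "'a::field_char_0"
  assumes "root_of_unity x" "rpoly g x = 0"
  shows "rpoly g (inverse x) = 0"
proof -
  obtain n where "0 < n" "x ^ n = 1" using assms(1) unfolding root_of_unity_def by blast
  then have "rpoly (monom 1 n - 1) x = 0" by simp
  then obtain \<xi> :: complex where \<xi>: "\<And>g. rpoly g x = 0 \<longleftrightarrow> rpoly g \<xi> = 0"
    using ex_complex_rat_conjugate monom_1_minus_1_nonzero[OF \<open>0 < n\<close>] by blast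
  have "\<xi> ^ n = 1" using \<xi>[of "monom 1 n - 1"] \<open>x ^ n = 1\<close> by simp
  then have "norm \<xi> = 1" using \<open>0 < n\<close> power_eq_1_iff by blast
  then have "\<xi> \<noteq> 0" "\<xi> * cnj \<xi> = 1"
    using complex_norm_square[of \<xi>] by auto
  then have "cnj \<xi> = inverse \<xi>" using inverse_unique by metis
  have "rpoly g \<xi> = 0" using \<xi> assms(2) by blast
  then have "rpoly g (inverse \<xi>) = 0"
    using rpoly_cnj[of g \<xi>] \<open>cnj \<xi> = inverse \<xi>\<close> by simp
  \<comment> \<open>vanishing at the inverse is a rational polynomial condition, so it transfers back to \<open>x\<close>\<close>
  then have "rpoly (reflect_poly g) \<xi> = 0"
    using rpoly_reflect_poly[OF \<open>\<xi> \<noteq> 0\<close>] by simp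
  then have "rpoly (reflect_poly g) x = 0" using \<xi> by blast
  then show ?thesis
    using rpoly_reflect_poly[of x g] root_of_unity_nonzero[OF assms(1)] by simp
qed

section \<open>Singular matrices of roots of unity\<close>

lemma cross_relation_inverse_cases:
  fixes a b c d :: "'a::field"
  assumes nonzero: "a \<noteq> 0" "b \<noteq> 0" "c \<noteq> 0" "d \<noteq> 0"
    and rel: "(a - 1) * (d - 1) = (b - 1) * (c - 1)"
    and rel_inverse: "(inverse a - 1) * (inverse d - 1) = (inverse b - 1) * (inverse c - 1)"
  shows "(a = 1 \<and> b = 1) \<or> (c = 1 \<and> d = 1) \<or> (a = c \<and> b = d) \<or>
         (a = 1 \<and> c = 1) \<or> (b = 1 \<and> d = 1) \<or> (a = b \<and> c = d)"
proof (cases "a = 1 \<or> d = 1")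
  case True
  then have "(b - 1) * (c - 1) = 0" using rel by auto
  then show ?thesis using True by auto
next
  case False
  then have "(a - 1) * (d - 1) \<noteq> 0" by simp
  have inverse_rel: "(inverse x - 1) * (inverse y - 1) = (x - 1) * (y - 1) / (x * y)"
    if "x \<noteq> 0" "y \<noteq> 0" for x y :: 'a
    using that by (simp add: field_simps)
  have "(a - 1) * (d - 1) / (a * d) = (inverse a - 1) * (inverse d - 1)"
    using inverse_rel nonzero by simp
  also have "\<dots> = (b - 1) * (c - 1) / (b * c)"
    using inverse_rel nonzero rel_inverse by simp
  finally have "(a - 1) * (d - 1) / (a * d) = (a - 1) * (d - 1) / (b * c)"
    by (simp only: rel)
  with \<open>(a - 1) * (d - 1) \<noteq> 0\<close> have prod: "a * d = b * c"
    using divide_cancel_left by blast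
  then have sum: "a + d = b + c" using rel by (simp add: algebra_simps)
  have "(a - b) * (a - c) = a * a - a * (b + c) + b * c" by (simp add: algebra_simps)
  also have "\<dots> = 0" unfolding sum[symmetric] prod[symmetric] by (simp add: algebra_simps)
  finally have "a = b \<or> a = c" by simp
  then show ?thesis using prod sum nonzero by auto
qed

lemma root_of_unity_relation_inverse:
  fixes a b c d :: "'a::field_char_0"
  assumes "root_of_unity a" "root_of_unity b" "root_of_unity c" "root_of_unity d"
    and rel: "(a - 1) * (d - 1) = (b - 1) * (c - 1)"
  shows "(inverse a - 1) * (inverse d - 1) = (inverse b - 1) * (inverse c - 1)"
proof -
  obtain \<theta> where \<theta>: "root_of_unity \<theta>" "{a, b, c, d} \<subseteq> range (power \<theta>)"
    using roots_of_unity_common_generator[of "{a, b, c, d}"] assms by auto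
  then obtain i j k l where "a = \<theta> ^ i" "b = \<theta> ^ j" "c = \<theta> ^ k" "d = \<theta> ^ l"
    by auto
  moreover define g :: "rat poly" where
    "g = (monom 1 i - 1) * (monom 1 l - 1) - (monom 1 j - 1) * (monom 1 k - 1)"
  ultimately have "rpoly g \<theta> = 0" using rel by simp
  then have "rpoly g (inverse \<theta>) = 0" by (rule rpoly_inverse_root_of_unity[OF \<theta>(1)])
  then show ?thesis
    unfolding g_def \<open>a = \<theta> ^ i\<close> \<open>b = \<theta> ^ j\<close> \<open>c = \<theta> ^ k\<close> \<open>d = \<theta> ^ l\<close>
    by (simp add: power_inverse)
qed

text \<open>The entry at \<open>(i, j)\<close> after rescaling the rows and columns of \<open>M\<close> so that its first row
  and first column consist of ones.\<close>
definition cross_ratio :: "'a::field ^ 3 ^ 3 \<Rightarrow> 3 \<Rightarrow> 3 \<Rightarrow> 'a" where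
  "cross_ratio M i j = M $ i $ j * M $ 1 $ 1 / (M $ i $ 1 * M $ 1 $ j)"

lemma cross_ratio_transpose: "cross_ratio (transpose M) i j = cross_ratio M j i"
  by (simp add: cross_ratio_def transpose_def mult.commute)

lemma
  fixes M :: "'a::field ^ 3 ^ 3"
  assumes "\<forall>i j. M $ i $ j \<noteq> 0"
  shows cross_ratio_first_row: "cross_ratio M 1 k = 1"
    and cross_ratio_first_column: "cross_ratio M k 1 = 1"
  using assms by (simp_all add: cross_ratio_def)

lemma det_3_cross_ratio:
  fixes M :: "'a::field ^ 3 ^ 3"
  assumes "\<forall>i j. M $ i $ j \<noteq> 0"
  shows "det M = M $ 2 $ 1 * M $ 3 $ 1 * M $ 1 $ 2 * M $ 1 $ 3 / M $ 1 $ 1 *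
    ((cross_ratio M 2 2 - 1) * (cross_ratio M 3 3 - 1) - (cross_ratio M 2 3 - 1) * (cross_ratio M 3 2 - 1))"
  using assms unfolding det_3 cross_ratio_def by (simp add: field_simps)

lemma proportional_rows_if_cross_ratio_eq:
  fixes M :: "'a::field ^ 3 ^ 3"
  assumes "\<forall>i j. M $ i $ j \<noteq> 0" "\<forall>k. cross_ratio M i k = cross_ratio M j k"
  shows "proportional (row i M) (row j M)"
proof -
  have "M $ j $ 1 * M $ i $ k - M $ i $ 1 * M $ j $ k = 0" for k
    using assms spec[OF assms(2), of k] by (simp add: cross_ratio_def field_simps)
  then have "M $ j $ 1 *s row i M + (- M $ i $ 1) *s row j M = 0"
    by (simp add: vec_eq_iff row_def)
  then show ?thesis
    unfolding proportional_def using assms(1) by blast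
qed

lemma proportional_columns_if_cross_ratio_eq:
  fixes M :: "'a::field ^ 3 ^ 3"
  assumes "\<forall>i j. M $ i $ j \<noteq> 0" "\<forall>k. cross_ratio M k i = cross_ratio M k j"
  shows "proportional (column i M) (column j M)"
proof -
  have "\<forall>i j. transpose M $ i $ j \<noteq> 0"
    using assms(1) by (simp add: transpose_def)
  moreover have "\<forall>k. cross_ratio (transpose M) i k = cross_ratio (transpose M) j k"
    unfolding cross_ratio_transpose by (rule assms(2))
  ultimately have "proportional (row i (transpose M)) (row j (transpose M))"
    by (rule proportional_rows_if_cross_ratio_eq)
  then show ?thesis by (simp only: row_transpose)
qed

lemma proportional_if_cross_ratio_cases:
  fixes M :: "'a::field ^ 3 ^ 3"
  assumes nonzero: "\<forall>i j. M $ i $ j \<noteq> 0"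
    and cases: "(C 2 2 = 1 \<and> C 2 3 = 1) \<or> (C 3 2 = 1 \<and> C 3 3 = 1) \<or>
      (C 2 2 = C 3 2 \<and> C 2 3 = C 3 3) \<or> (C 2 2 = 1 \<and> C 3 2 = 1) \<or>
      (C 2 3 = 1 \<and> C 3 3 = 1) \<or> (C 2 2 = C 2 3 \<and> C 3 2 = C 3 3)"
    and C_def: "C = cross_ratio M"
  shows "(\<exists>i j. i \<noteq> j \<and> proportional (row i M) (row j M))
       \<or> (\<exists>i j. i \<noteq> j \<and> proportional (column i M) (column j M))"
proof -
  have rows: ?thesis if "i \<noteq> j" "C i 1 = C j 1" "C i 2 = C j 2" "C i 3 = C j 3" for i j
    using that proportional_rows_if_cross_ratio_eq[OF nonzero, of i j]
    unfolding C_def forall_3 by blast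
  have columns: ?thesis if "i \<noteq> j" "C 1 i = C 1 j" "C 2 i = C 2 j" "C 3 i = C 3 j" for i j
    using that proportional_columns_if_cross_ratio_eq[OF nonzero, of i j]
    unfolding C_def forall_3 by blast
  have "C 1 k = 1" "C k 1 = 1" for k
    unfolding C_def using nonzero by (rule cross_ratio_first_row, rule cross_ratio_first_column)
  then show ?thesis
    using cases rows[of 1 2] rows[of 1 3] rows[of 2 3]
      columns[of 1 2] columns[of 1 3] columns[of 2 3]
    by auto
qed

theorem singular_root_of_unity_matrix_proportional:
  fixes M :: "'a::field_char_0 ^ 3 ^ 3"
  assumes roots: "\<forall>i j. root_of_unity (M $ i $ j)" and "det M = 0"
  shows "(\<exists>i j. i \<noteq> j \<and> proportional (row i M) (row j M))
       \<or> (\<exists>i j. i \<noteq> j \<and> proportional (column i M) (column j M))"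
proof -
  let ?C = "cross_ratio M"
  have nonzero: "\<forall>i j. M $ i $ j \<noteq> 0"
    using roots root_of_unity_nonzero by blast
  have C_roots: "root_of_unity (?C i j)" for i j
    unfolding cross_ratio_def using roots
    by (simp add: root_of_unity_mult root_of_unity_divide)
  then have C_nonzero: "?C i j \<noteq> 0" for i j
    by (rule root_of_unity_nonzero)
  have "M $ 2 $ 1 * M $ 3 $ 1 * M $ 1 $ 2 * M $ 1 $ 3 / M $ 1 $ 1 \<noteq> 0"
    using nonzero by simp
  then have rel: "(?C 2 2 - 1) * (?C 3 3 - 1) = (?C 2 3 - 1) * (?C 3 2 - 1)"
    using \<open>det M = 0\<close> det_3_cross_ratio[OF nonzero] by simp
  then have "(inverse (?C 2 2) - 1) * (inverse (?C 3 3) - 1) =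
      (inverse (?C 2 3) - 1) * (inverse (?C 3 2) - 1)"
    by (intro root_of_unity_relation_inverse C_roots)
  then have "(?C 2 2 = 1 \<and> ?C 2 3 = 1) \<or> (?C 3 2 = 1 \<and> ?C 3 3 = 1) \<or>
      (?C 2 2 = ?C 3 2 \<and> ?C 2 3 = ?C 3 3) \<or> (?C 2 2 = 1 \<and> ?C 3 2 = 1) \<or>
      (?C 2 3 = 1 \<and> ?C 3 3 = 1) \<or> (?C 2 2 = ?C 2 3 \<and> ?C 3 2 = ?C 3 3)"
    using rel C_nonzero by (intro cross_relation_inverse_cases) auto
  then show ?thesis
    by (rule proportional_if_cross_ratio_cases[OF nonzero _ refl])
qed

theorem lemma5p17:
  fixes x y z :: "'a::field_char_0" and a b c :: int
  assumes "root_of_unity x" and "root_of_unity y" and "root_of_unity z"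
    and "det (M3 a b c x y z) = 0"
  shows "(\<exists>i j. i \<noteq> j \<and> proportional (row i (M3 a b c x y z)) (row j (M3 a b c x y z)))
       \<or> (\<exists>i j. i \<noteq> j \<and> proportional (column i (M3 a b c x y z)) (column j (M3 a b c x y z)))"
proof (rule singular_root_of_unity_matrix_proportional)
  show "\<forall>i j. root_of_unity (M3 a b c x y z $ i $ j)"
    using assms(1-3) by (simp add: M3_def root_of_unity_power_int)
  show "det (M3 a b c x y z) = 0" by (fact assms(4))
qed

end
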